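(* Let $a,b,c\in\mathbb{R}\setminus\{0\}$ with $b^2-4ac>0$. Let $\{P_m(z)\}_{m\geq 0}$ be the sequence of functions of $z$ generated by \[ \sum_{m=0}^\infty P_m(z)\, t^m=\frac{1}{(at^2+bt+c)(1-tz)}. \] Then $\lim \mathcal{Z}(P_m)$ exists and \[ \lim \mathcal{Z}(P_m)=\left\{z\in\mathbb{C}: |z|=\frac{1}{|\alpha|}\right\}, \] where $\alpha$ is the zero of $at^2+bt+c$ of smallest modulus.
   Context: A sequence $\{P_m(z)\}$ is generated by $f(t,z)$ if, for each $z\in\mathbb{C}$, $f(t,z)$ is analytic in $t$ in a neighborhood of $t=0$ and $P_m(z)$ is the coefficient of $t^m$ in the power series expansion of $f(t,z)$ in $t$ about $0$. For a sequence of functions $f_m$ analytic on a region $D$ (here $D=\mathbb{C}$), $\mathcal{Z}(f_m)$ denotes the set of zeros of $f_m$ in $D$. $\liminf\mathcal{Z}(f_m)$ is the set of $z^*\in D$ such that for every $r>0$ there is $N$ with $B(r,z^* )\cap\mathcal{Z}(f_m)\neq\emptyset$ for all $m>N$; $\limsup\mathcal{Z}(f_m)$ is the set of $z^*\in D$ such that for every $r>0$ and every $N$ there is $m>N$ with $B(r,z^* )\cap\mathcal{Z}(f_m)\neq\emptyset$. When these coincide, $\lim\mathcal{Z}(f_m)$ denotes the common set. Here $B(r,z^* )$ is the open disk of radius $r$ centered at $z^*$. *)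

theory Defs
  imports "HOL-Complex_Analysis.Complex_Analysis"
begin

definition gen_seq :: "(complex \<Rightarrow> complex \<Rightarrow> complex) \<Rightarrow> nat \<Rightarrow> complex \<Rightarrow> complex" where
  "gen_seq f m z = (deriv ^^ m) (\<lambda>t. f t z) 0 / fact m"

definition zero_set :: "(complex \<Rightarrow> complex) \<Rightarrow> complex set" where
  "zero_set f = {z. f z = 0}"

definition liminf_zeros :: "(nat \<Rightarrow> complex \<Rightarrow> complex) \<Rightarrow> complex set" where
  "liminf_zeros f = {z. \<forall>r>0. \<exists>N. \<forall>m>N. ball z r \<inter> zero_set (f m) \<noteq> {}}"

definition limsup_zeros :: "(nat \<Rightarrow> complex \<Rightarrow> complex) \<Rightarrow> complex set" where
  "limsup_zeros f = {z. \<forall>r>0. \<forall>N. \<exists>m>N. ball z r \<inter> zero_set (f m) \<noteq> {}}"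

end

(* Factor a t^2 + b t + c = c (1 - t/beta) (1 - t/alpha) with |alpha| < |beta|.  Expanding the
   three geometric series shows that P_m(z) is a nonzero multiple of h_m(s, 1, alpha z), where h_m
   is the complete homogeneous symmetric polynomial of degree m and s = alpha/beta, |s| < 1.  So it
   suffices that the zeros of Q_m(w) = h_m(s, 1, w) converge to the unit circle.  Clearing
   denominators,
     (1 - s) (w - s) (w - 1) Q_m(w) = (1 - s) w^(m+2) - (w - s) + s^(m+2) (w - 1).
   Outside the circle the power w^(m+2) dominates, and inside it (1 - s) (1 - w) Q_m(w) tends to 1,
   locally uniformly in both cases.  Near a point c of the circle, w^n = ((w - s) - s^n (w - 1))/(1 - s)
   has a solution by Brouwer's fixed point theorem: a branch of the n-th root of the right-hand
   side moves points by O(1/n), hence maps a small disc around c into itself for large n. *)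

theory Submission
  imports Defs
begin

definition complete_hom2 :: "'a::comm_semiring_1 \<Rightarrow> 'a \<Rightarrow> nat \<Rightarrow> 'a" where
  "complete_hom2 x y m = (\<Sum>j=0..m. x ^ j * y ^ (m - j))"

definition complete_hom3 :: "'a::comm_semiring_1 \<Rightarrow> 'a \<Rightarrow> 'a \<Rightarrow> nat \<Rightarrow> 'a" where
  "complete_hom3 x y z m = (\<Sum>i=0..m. complete_hom2 x y i * z ^ (m - i))"

lemma complete_hom2_Suc: "complete_hom2 x y (Suc m) = y * complete_hom2 x y m + x ^ Suc m"
proof -
  have "(\<Sum>j=0..m. x ^ j * y ^ (Suc m - j)) = y * complete_hom2 x y m"
    unfolding complete_hom2_def sum_distrib_left
    by (intro sum.cong refl) (simp add: Suc_diff_le mult_ac)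
  then show ?thesis
    by (simp add: complete_hom2_def sum.atLeast0_atMost_Suc)
qed

lemma complete_hom3_Suc:
  "complete_hom3 x y z (Suc m) = z * complete_hom3 x y z m + complete_hom2 x y (Suc m)"
proof -
  have "(\<Sum>i=0..m. complete_hom2 x y i * z ^ (Suc m - i)) = z * complete_hom3 x y z m"
    unfolding complete_hom3_def sum_distrib_left
    by (intro sum.cong refl) (simp add: Suc_diff_le mult_ac)
  then show ?thesis
    by (simp add: complete_hom3_def sum.atLeast0_atMost_Suc)
qed

lemma complete_hom2_diff:
  fixes x y :: "'a::comm_ring_1"
  shows "(x - y) * complete_hom2 x y m = x ^ Suc m - y ^ Suc m"
  using power_diff_sumr2[of x "Suc m" y]
  by (simp add: complete_hom2_def atLeast0AtMost lessThan_Suc_atMost mult.commute)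

lemma complete_hom3_diff:
  fixes x y z :: "'a::comm_ring_1"
  shows "(z - y) * complete_hom3 x y z m = complete_hom2 x z (Suc m) - complete_hom2 x y (Suc m)"
proof (induction m)
  case 0
  show ?case by (simp add: complete_hom3_def complete_hom2_def)
next
  case (Suc m)
  have "(z - y) * complete_hom3 x y z (Suc m)
      = z * ((z - y) * complete_hom3 x y z m) + (z - y) * complete_hom2 x y (Suc m)"
    by (simp add: complete_hom3_Suc algebra_simps)
  also have "\<dots> = z * complete_hom2 x z (Suc m) - y * complete_hom2 x y (Suc m)"
    unfolding Suc.IH by (simp add: algebra_simps)
  also have "\<dots> = complete_hom2 x z (Suc (Suc m)) - complete_hom2 x y (Suc (Suc m))"
    by (simp add: complete_hom2_Suc[of x z "Suc m"] complete_hom2_Suc[of x y "Suc m"])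
  finally show ?case .
qed

lemma complete_hom3_scale:
  "complete_hom3 (k * x) (k * y) (k * z) m = k ^ m * complete_hom3 x y z m"
proof -
  have power_split: "k ^ j * k ^ (i - j) = k ^ i" if "j \<in> {0..i}" for i j
    using that by (simp flip: power_add)
  have h2: "complete_hom2 (k * x) (k * y) i = k ^ i * complete_hom2 x y i" for i
    unfolding complete_hom2_def sum_distrib_left
    by (intro sum.cong refl) (simp add: power_mult_distrib flip: power_split mult.assoc, simp add: mult_ac)
  show ?thesis
    unfolding complete_hom3_def sum_distrib_left h2
    by (intro sum.cong refl) (simp add: power_mult_distrib flip: power_split mult.assoc, simp add: mult_ac)
qed

lemma geometric_has_fps_expansion:
  "(\<lambda>t::complex. inverse (1 - x * t)) has_fps_expansion Abs_fps (\<lambda>k. x ^ k)"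
proof -
  have "(\<lambda>t::complex. 1 - x * t) has_fps_expansion 1 - fps_const x * fps_X"
    by (intro fps_expansion_intros)
  then have "(\<lambda>t. inverse (1 - x * t)) has_fps_expansion inverse (1 - fps_const x * fps_X)"
    by (rule has_fps_expansion_inverse) simp
  also have "inverse (1 - fps_const x * fps_X) = Abs_fps (\<lambda>k. x ^ k)"
    using one_minus_const_fps_X_neg_power'[of 1 x] by simp
  finally show ?thesis .
qed

lemma gen_seq_geometric3:
  fixes C u v :: complex
  shows "gen_seq (\<lambda>t z. 1 / (C * ((1 - u * t) * (1 - v * t)) * (1 - t * z))) m z
       = complete_hom3 u v z m / C"
proof -
  define F where "F = (Abs_fps (\<lambda>k. u ^ k) * Abs_fps (\<lambda>k. v ^ k)) * Abs_fps (\<lambda>k. z ^ k)"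
  have "(\<lambda>t. 1 / C * ((inverse (1 - u * t) * inverse (1 - v * t)) * inverse (1 - z * t)))
      has_fps_expansion fps_const (1 / C) * F"
    unfolding F_def
    by (intro has_fps_expansion_cmult_left has_fps_expansion_mult geometric_has_fps_expansion)
  moreover have "(\<lambda>t. 1 / C * ((inverse (1 - u * t) * inverse (1 - v * t)) * inverse (1 - z * t)))
      = (\<lambda>t. 1 / (C * ((1 - u * t) * (1 - v * t)) * (1 - t * z)))"
    by (simp add: divide_inverse inverse_mult_distrib mult_ac)
  ultimately have "gen_seq (\<lambda>t z. 1 / (C * ((1 - u * t) * (1 - v * t)) * (1 - t * z))) m z
      = F $ m / C"
    unfolding gen_seq_def by (auto dest!: fps_nth_fps_expansion[where n = m] simp: fps_mult_left_const_nth)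
  also have "F $ m = complete_hom3 u v z m"
    by (simp add: F_def fps_mult_nth complete_hom3_def complete_hom2_def)
  finally show ?thesis .
qed

lemma gen_seq_geometric3_rescaled:
  fixes C a s :: complex
  assumes "a \<noteq> 0"
  shows "gen_seq (\<lambda>t z. 1 / (C * ((1 - s * t / a) * (1 - t / a)) * (1 - t * z))) m z
       = complete_hom3 s 1 (a * z) m / (a ^ m * C)"
proof -
  have "gen_seq (\<lambda>t z. 1 / (C * ((1 - s * t / a) * (1 - t / a)) * (1 - t * z))) m z
      = complete_hom3 (s / a) (1 / a) z m / C"
    using gen_seq_geometric3[of C "s / a" "1 / a" m z] by simp
  also have "complete_hom3 (s / a) (1 / a) z m = complete_hom3 (1 / a * s) (1 / a * 1) (1 / a * (a * z)) m"
    using assms by simp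
  also have "\<dots> = (1 / a) ^ m * complete_hom3 s 1 (a * z) m"
    by (rule complete_hom3_scale)
  finally show ?thesis
    by (simp add: power_one_over)
qed

lemma liminf_zeros_iff:
  "z \<in> liminf_zeros f \<longleftrightarrow> (\<forall>r>0. \<forall>\<^sub>F m in sequentially. \<exists>w\<in>ball z r. f m w = 0)"
  unfolding liminf_zeros_def zero_set_def eventually_at_top_dense by blast

lemma limsup_zeros_iff:
  "z \<in> limsup_zeros f \<longleftrightarrow> (\<forall>r>0. \<exists>\<^sub>F m in sequentially. \<exists>w\<in>ball z r. f m w = 0)"
  unfolding limsup_zeros_def zero_set_def frequently_def eventually_at_top_dense by blast

lemma liminf_zeros_subset_limsup_zeros: "liminf_zeros f \<subseteq> limsup_zeros f"
  by (auto simp: liminf_zeros_iff limsup_zeros_iff intro!: eventually_frequently)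

lemma bex_ball_rescale:
  fixes k :: complex
  assumes "k \<noteq> 0" "\<And>w. f w = 0 \<longleftrightarrow> g (k * w) = 0"
  shows "(\<exists>w\<in>ball z r. f w = 0) \<longleftrightarrow> (\<exists>w\<in>ball (k * z) (cmod k * r). g w = 0)"
proof -
  have dist: "dist (k * z) (k * w) = cmod k * dist z w" for w
    by (simp add: dist_norm norm_mult flip: right_diff_distrib)
  show ?thesis
  proof
    assume "\<exists>w\<in>ball z r. f w = 0"
    then show "\<exists>w\<in>ball (k * z) (cmod k * r). g w = 0"
      using assms by (auto simp: dist)
  next
    assume "\<exists>w\<in>ball (k * z) (cmod k * r). g w = 0"
    then obtain w where "dist (k * z) w < cmod k * r" "g w = 0"
      by auto
    moreover have "w = k * (w / k)"
      using assms(1) by simp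
    ultimately show "\<exists>w\<in>ball z r. f w = 0"
      using assms by (metis dist mem_ball mult_less_cancel_left_pos zero_less_norm_iff)
  qed
qed

lemma all_pos_rescale:
  fixes c :: real
  assumes "c > 0"
  shows "(\<forall>r>0. P (c * r)) \<longleftrightarrow> (\<forall>r>0. P r)"
proof
  assume P: "\<forall>r>0. P (c * r)"
  show "\<forall>r>0. P r"
  proof (intro allI impI)
    fix r :: real assume "r > 0"
    then have "r / c > 0" using assms by simp
    then have "P (c * (r / c))" using P by blast
    then show "P r" using assms by simp
  qed
qed (use assms in simp)

lemma zeros_rescale:
  fixes k :: complex
  assumes "k \<noteq> 0" "\<And>m w. f m w = 0 \<longleftrightarrow> g m (k * w) = 0"
  shows "liminf_zeros f = {z. k * z \<in> liminf_zeros g}"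
    and "limsup_zeros f = {z. k * z \<in> limsup_zeros g}"
proof -
  have ball: "(\<exists>w\<in>ball z r. f m w = 0) \<longleftrightarrow> (\<exists>w\<in>ball (k * z) (cmod k * r). g m w = 0)"
    for m z r
    by (rule bex_ball_rescale) (use assms in auto)
  have k: "cmod k > 0"
    using assms(1) by simp
  show "liminf_zeros f = {z. k * z \<in> liminf_zeros g}"
    unfolding set_eq_iff mem_Collect_eq liminf_zeros_iff ball
    by (intro allI all_pos_rescale[OF k])
  show "limsup_zeros f = {z. k * z \<in> limsup_zeros g}"
    unfolding set_eq_iff mem_Collect_eq limsup_zeros_iff ball
    by (intro allI all_pos_rescale[OF k])
qed

lemma complete_hom3_s_1_via_hom2:
  fixes s w :: "'a::comm_ring_1"
  shows "(1 - s) * (w - 1) * complete_hom3 s 1 w m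
       = (1 - s) * complete_hom2 s w (Suc m) - (1 - s ^ (m + 2))"
proof -
  have "(1 - s) * (w - 1) * complete_hom3 s 1 w m = (1 - s) * ((w - 1) * complete_hom3 s 1 w m)"
    by (simp only: mult.assoc)
  also have "\<dots> = (1 - s) * complete_hom2 s w (Suc m) - (1 - s) * complete_hom2 s 1 (Suc m)"
    by (simp only: complete_hom3_diff right_diff_distrib)
  also have "(1 - s) * complete_hom2 s 1 (Suc m) = 1 - s ^ (m + 2)"
    using complete_hom2_diff[of s 1 "Suc m"] by (simp add: algebra_simps)
  finally show ?thesis .
qed

lemma complete_hom3_s_1_closed_form:
  fixes s w :: "'a::comm_ring_1"
  shows "(1 - s) * (w - s) * (w - 1) * complete_hom3 s 1 w m
       = (1 - s) * w ^ (m + 2) - ((w - s) - s ^ (m + 2) * (w - 1))"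
proof -
  have h2: "(w - s) * complete_hom2 s w (Suc m) = w ^ (m + 2) - s ^ (m + 2)"
    using complete_hom2_diff[of s w "Suc m"] by (simp add: algebra_simps)
  have "(1 - s) * (w - s) * (w - 1) * complete_hom3 s 1 w m
      = (w - s) * ((1 - s) * (w - 1) * complete_hom3 s 1 w m)"
    by (simp only: mult_ac)
  also have "\<dots> = (1 - s) * ((w - s) * complete_hom2 s w (Suc m)) - (w - s) * (1 - s ^ (m + 2))"
    unfolding complete_hom3_s_1_via_hom2 by (simp add: algebra_simps)
  also have "\<dots> = (1 - s) * w ^ (m + 2) - ((w - s) - s ^ (m + 2) * (w - 1))"
    unfolding h2 by (simp add: algebra_simps)
  finally show ?thesis .
qed

lemma norm_complete_hom2_le:
  fixes x y :: "'a::real_normed_field"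
  assumes "norm x \<le> \<sigma>" "norm y \<le> \<sigma>"
  shows "norm (complete_hom2 x y m) \<le> real (Suc m) * \<sigma> ^ m"
proof -
  have "norm (complete_hom2 x y m) \<le> (\<Sum>j=0..m. norm (x ^ j * y ^ (m - j)))"
    unfolding complete_hom2_def by (rule norm_sum)
  also have "\<dots> = (\<Sum>j=0..m. norm x ^ j * norm y ^ (m - j))"
    by (simp add: norm_mult norm_power)
  also have "\<dots> \<le> (\<Sum>j=0..m. \<sigma> ^ j * \<sigma> ^ (m - j))"
    using assms order_trans[OF norm_ge_zero assms(1)] by (intro sum_mono mult_mono power_mono) auto
  also have "\<dots> = real (Suc m) * \<sigma> ^ m"
    by (simp flip: power_add)
  finally show ?thesis .
qed

lemma complete_hom3_eventually_nonzero_outside: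
  fixes s w0 :: complex
  assumes s: "cmod s < 1" and w0: "cmod w0 > 1"
  shows "\<exists>r>0. \<forall>\<^sub>F m in sequentially. \<forall>w\<in>ball w0 r. complete_hom3 s 1 w m \<noteq> 0"
proof -
  define \<rho> where "\<rho> = (1 + cmod w0) / 2"
  have \<rho>: "\<rho> > 1" "cmod w0 - \<rho> > 0"
    using w0 by (auto simp: \<rho>_def)
  obtain N where N: "4 / (1 - cmod s) < \<rho> ^ N"
    using real_arch_pow[OF \<rho>(1)] by blast
  have nonzero: "\<forall>w\<in>ball w0 (cmod w0 - \<rho>). complete_hom3 s 1 w m \<noteq> 0" if "m \<ge> N" for m
  proof
    fix w assume "w \<in> ball w0 (cmod w0 - \<rho>)"
    then have w: "cmod w > \<rho>"
      using norm_triangle_ineq2[of w0 w] by (auto simp: dist_norm norm_minus_commute)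
    have "4 < (1 - cmod s) * \<rho> ^ N"
      using N s by (simp add: field_simps)
    also have "\<dots> \<le> (1 - cmod s) * cmod w ^ (m + 1)"
      using that w \<rho>(1) s
      by (intro mult_left_mono order_trans[OF power_increasing power_mono]) auto
    finally have large: "4 < (1 - cmod s) * cmod w ^ (m + 1)" .
    show "complete_hom3 s 1 w m \<noteq> 0"
    proof
      assume "complete_hom3 s 1 w m = 0"
      then have eq: "(1 - s) * w ^ (m + 2) = (w - s) - s ^ (m + 2) * (w - 1)"
        using complete_hom3_s_1_closed_form[of s w m] by simp
      have "(1 - cmod s) * cmod w ^ (m + 2) \<le> cmod ((1 - s) * w ^ (m + 2))"
        using norm_triangle_ineq2[of 1 s] by (simp add: norm_mult norm_power mult_right_mono)
      also have "\<dots> \<le> cmod (w - s) + cmod (s ^ (m + 2) * (w - 1))"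
        unfolding eq by (rule norm_triangle_ineq4)
      also have "\<dots> \<le> (cmod w + 1) + 1 * (cmod w + 1)"
      proof (intro add_mono)
        show "cmod (w - s) \<le> cmod w + 1"
          using s norm_triangle_ineq4[of w s] by simp
        show "cmod (s ^ (m + 2) * (w - 1)) \<le> 1 * (cmod w + 1)"
          unfolding norm_mult norm_power using s norm_triangle_ineq4[of w 1]
          by (intro mult_mono power_le_one) auto
      qed
      also have "\<dots> \<le> 4 * cmod w"
        using w \<rho>(1) by simp
      finally have "(1 - cmod s) * cmod w ^ (m + 1) * cmod w \<le> 4 * cmod w"
        by (simp add: algebra_simps)
      moreover have "cmod w > 0"
        using w \<rho>(1) by linarith
      ultimately have "(1 - cmod s) * cmod w ^ (m + 1) \<le> 4"
        by (simp only: mult_le_cancel_right_pos)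
      then show False
        using large by simp
    qed
  qed
  show ?thesis
    by (intro exI[of _ "cmod w0 - \<rho>"] conjI \<rho>(2) eventually_mono[OF eventually_ge_at_top nonzero])
qed

lemma complete_hom3_eventually_nonzero_inside:
  fixes s w0 :: complex
  assumes s: "cmod s < 1" and w0: "cmod w0 < 1"
  shows "\<exists>r>0. \<forall>\<^sub>F m in sequentially. \<forall>w\<in>ball w0 r. complete_hom3 s 1 w m \<noteq> 0"
proof -
  define \<rho> where "\<rho> = (1 + cmod w0) / 2"
  define \<sigma> where "\<sigma> = max (cmod s) \<rho>"
  have \<rho>: "\<rho> < 1" "\<rho> - cmod w0 > 0"
    using w0 by (auto simp: \<rho>_def)
  have \<sigma>: "0 \<le> \<sigma>" "\<sigma> < 1"
    using s \<rho> by (auto simp: \<sigma>_def le_max_iff_disj)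
  have "(\<lambda>m. cmod s ^ m + 2 * (real m * \<sigma> ^ m + 2 * \<sigma> ^ m)) \<longlonglongrightarrow> 0 + 2 * (0 + 2 * 0)"
    using s \<sigma> powser_times_n_limit_0[of \<sigma>]
    by (intro tendsto_intros LIMSEQ_power_zero) auto
  then have small: "\<forall>\<^sub>F m in sequentially. cmod s ^ m + 2 * (real m * \<sigma> ^ m + 2 * \<sigma> ^ m) < 1"
    by (intro order_tendstoD) auto
  have nonzero: "\<forall>w\<in>ball w0 (\<rho> - cmod w0). complete_hom3 s 1 w m \<noteq> 0"
    if m: "cmod s ^ m + 2 * (real m * \<sigma> ^ m + 2 * \<sigma> ^ m) < 1" for m
  proof
    fix w assume "w \<in> ball w0 (\<rho> - cmod w0)"
    then have w: "cmod w \<le> \<sigma>"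
      using norm_triangle_ineq[of w0 "w - w0"] by (auto simp: \<sigma>_def dist_norm norm_minus_commute)
    show "complete_hom3 s 1 w m \<noteq> 0"
    proof
      assume "complete_hom3 s 1 w m = 0"
      then have eq: "1 - s ^ (m + 2) = (1 - s) * complete_hom2 s w (Suc m)"
        using complete_hom3_s_1_via_hom2[of s w m] by simp
      have "1 - cmod s ^ m \<le> 1 - cmod s ^ (m + 2)"
        using s power_decreasing[of m "m + 2" "cmod s"] by simp
      also have "\<dots> \<le> cmod (1 - s ^ (m + 2))"
        using norm_triangle_ineq2[of 1 "s ^ (m + 2)"] by (simp only: norm_one norm_power)
      also have "\<dots> \<le> 2 * (real (m + 2) * \<sigma> ^ (m + 1))"
        unfolding eq norm_mult
        using s w norm_triangle_ineq4[of 1 s] norm_complete_hom2_le[of s \<sigma> w "Suc m"]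
        by (intro mult_mono) (auto simp: \<sigma>_def)
      also have "\<dots> \<le> 2 * (real (m + 2) * \<sigma> ^ m)"
        using \<sigma> by (intro mult_left_mono power_decreasing) auto
      also have "\<dots> = 2 * (real m * \<sigma> ^ m + 2 * \<sigma> ^ m)"
        by (simp add: algebra_simps)
      finally show False
        using m by simp
    qed
  qed
  show ?thesis
    by (intro exI[of _ "\<rho> - cmod w0"] conjI \<rho>(2) eventually_mono[OF small nonzero])
qed

lemma unit_circle_point_near_ne_1:
  fixes w0 :: complex
  assumes "cmod w0 = 1" "e > 0"
  obtains c where "cmod c = 1" "c \<noteq> 1" "dist c w0 < e"
proof -
  have "1 \<in> sphere (0::complex) 1" "-1 \<in> sphere (0::complex) 1"
    by simp_all
  then have "sphere (0::complex) 1 \<noteq> {x}" for x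
    by (metis one_neq_neg_one singletonD)
  then have "w0 islimpt sphere 0 1"
    using assms(1) by (intro connected_imp_perfect connected_sphere) auto
  then obtain c where "c \<in> sphere 0 1" "c \<noteq> w0" "dist c w0 < e"
    using assms(2) by (auto simp: islimpt_approachable)
  then show ?thesis
    using that assms by (cases "c = 1") auto
qed

lemma norm_Ln_le_abs_ln_norm:
  assumes "z \<noteq> 0"
  shows "cmod (Ln z) \<le> \<bar>ln (cmod z)\<bar> + pi"
proof -
  have "cmod (Ln z) \<le> \<bar>Re (Ln z)\<bar> + \<bar>Im (Ln z)\<bar>"
    by (rule cmod_le)
  moreover have "\<bar>Im (Ln z)\<bar> \<le> pi"
    using mpi_less_Im_Ln[OF assms] Im_Ln_le_pi[OF assms] by auto
  ultimately show ?thesis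
    using assms by simp
qed

lemma norm_Ln_le_half:
  assumes "cmod (z - 1) \<le> 1/4"
  shows "cmod (Ln z) \<le> 1/2"
  using norm_Ln_le[of "z - 1"] assms by simp

lemma notin_nonpos_Reals_near_1:
  assumes "cmod (z - 1) < 1"
  shows "z \<notin> \<real>\<^sub>\<le>\<^sub>0"
proof -
  have "Re z > 0"
    using abs_Re_le_cmod[of "z - 1"] assms by simp
  then show ?thesis
    by (simp add: complex_nonpos_Reals_iff)
qed

lemma power_eq_solvable_in_cball:
  fixes g :: "complex \<Rightarrow> complex"
  assumes c: "cmod c = 1" and \<rho>: "0 < \<rho>" "\<rho> \<le> 1"
    and g_cont: "continuous_on (cball c \<rho>) g" and g0: "g0 \<noteq> 0"
    and g_near: "\<And>w. w \<in> cball c \<rho> \<Longrightarrow> cmod (g w / g0 - 1) \<le> 1/4"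
    and n: "2 * (\<bar>ln (cmod g0)\<bar> + pi + 1/2) \<le> real n * \<rho>"
  shows "\<exists>w\<in>cball c \<rho>. w ^ n = g w"
proof -
  define M where "M = \<bar>ln (cmod g0)\<bar> + pi"
  have "0 < 2 * (\<bar>ln (cmod g0)\<bar> + pi + 1/2)"
    using pi_gt_zero by (simp add: add_nonneg_pos)
  then have "0 < real n * \<rho>"
    using n by linarith
  then have "real n > 0"
    using \<rho>(1) by (simp add: zero_less_mult_iff)
  have cn: "c ^ n \<noteq> 0"
    using c by auto
  \<comment> \<open>\<open>c * exp (K / n)\<close> is an n-th root of \<open>g0\<close>, so a fixed point of \<open>\<phi>\<close> below solves \<open>w ^ n = g w\<close>\<close>
  define K where "K = Ln (g0 / c ^ n)"
  have K: "cmod K \<le> M"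
    using norm_Ln_le_abs_ln_norm[of "g0 / c ^ n"] g0 cn c
    by (simp add: K_def M_def norm_divide norm_power)
  have Ln_g: "cmod (Ln (g w / g0)) \<le> 1/2" "g w / g0 \<notin> \<real>\<^sub>\<le>\<^sub>0" if "w \<in> cball c \<rho>" for w
    using norm_Ln_le_half[OF g_near[OF that]] notin_nonpos_Reals_near_1[of "g w / g0"] g_near[OF that]
    by auto
  define \<phi> where "\<phi> w = c * exp ((K + Ln (g w / g0)) / of_nat n)" for w
  have "continuous_on (cball c \<rho>) \<phi>"
    unfolding \<phi>_def using Ln_g(2) \<open>real n > 0\<close>
    by (intro continuous_intros g_cont) auto
  moreover have "\<phi> \<in> cball c \<rho> \<rightarrow> cball c \<rho>"
  proof
    fix w assume w: "w \<in> cball c \<rho>"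
    define E where "E = (K + Ln (g w / g0)) / of_nat n"
    have "cmod E \<le> (M + 1/2) / real n"
      unfolding E_def norm_divide norm_of_nat
      using K Ln_g(1)[OF w] norm_triangle_ineq[of K "Ln (g w / g0)"]
      by (intro divide_right_mono) auto
    also have "\<dots> \<le> \<rho> / 2"
      using n \<open>real n > 0\<close> by (simp add: M_def field_simps)
    finally have E: "cmod E \<le> \<rho> / 2" .
    have "cmod (exp E - 1) \<le> 3/2 * cmod E"
      using E \<rho>(2) by (intro norm_exp_bounds(2)) auto
    also have "\<dots> \<le> \<rho>"
      using E \<rho> by simp
    finally have "cmod (c * (1 - exp E)) \<le> \<rho>"
      using c by (simp add: norm_mult norm_minus_commute)
    moreover have "c - \<phi> w = c * (1 - exp E)"
      by (simp add: \<phi>_def E_def algebra_simps)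
    ultimately show "\<phi> w \<in> cball c \<rho>"
      by (simp add: dist_norm)
  qed
  ultimately obtain w where w: "w \<in> cball c \<rho>" "\<phi> w = w"
    using brouwer_ball[OF \<rho>(1)] by blast
  have "w ^ n = c ^ n * exp (of_nat n * ((K + Ln (g w / g0)) / of_nat n))"
    using w(2) by (metis \<phi>_def exp_of_nat_mult power_mult_distrib)
  also have "\<dots> = c ^ n * ((g0 / c ^ n) * (g w / g0))"
  proof -
    have "g w / g0 \<noteq> 0"
      using Ln_g(2)[OF w(1)] nonpos_Reals_zero_I by metis
    then show ?thesis
      using \<open>real n > 0\<close> g0 cn by (simp add: K_def exp_add)
  qed
  also have "\<dots> = g w"
    using g0 cn by simp
  finally show ?thesis
    using w(1) by blast
qed

lemma norm_perturbed_ratio_le: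
  fixes s c w :: complex
  assumes s: "cmod s < 1" and c: "cmod c = 1"
    and wc: "cmod (w - c) \<le> (1 - cmod s) / 8" and n: "3 * cmod s ^ n \<le> (1 - cmod s) / 8"
  shows "cmod (((w - s) - s ^ n * (w - 1)) / (c - s) - 1) \<le> 1/4"
proof -
  have cs: "1 - cmod s \<le> cmod (c - s)"
    using norm_triangle_ineq2[of c s] c by simp
  have "cmod (w - c) * 8 \<le> 1 - cmod s"
    using wc by (simp add: field_simps)
  then have "cmod (w - c) \<le> 1"
    using norm_ge_zero[of s] by linarith
  then have w1: "cmod (w - 1) \<le> 3"
    using norm_triangle_ineq[of "w - c" "c - 1"] norm_triangle_ineq4[of c 1] c by simp
  have "cmod (s ^ n * (w - 1)) \<le> 3 * cmod s ^ n"
    unfolding norm_mult norm_power using mult_right_mono[OF w1, of "cmod s ^ n"]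
    by (simp add: mult.commute)
  then have num: "cmod ((w - c) - s ^ n * (w - 1)) \<le> (1 - cmod s) / 4"
    using norm_triangle_ineq4[of "w - c" "s ^ n * (w - 1)"] wc n by simp
  have "c - s \<noteq> 0"
    using cs s by auto
  then have "((w - s) - s ^ n * (w - 1)) / (c - s) - 1 = ((w - c) - s ^ n * (w - 1)) / (c - s)"
    by (simp add: field_simps)
  then have "cmod (((w - s) - s ^ n * (w - 1)) / (c - s) - 1)
      = cmod ((w - c) - s ^ n * (w - 1)) / cmod (c - s)"
    by (simp add: norm_divide)
  also have "\<dots> \<le> ((1 - cmod s) / 4) / (1 - cmod s)"
    using num cs s by (intro frac_le) auto
  also have "\<dots> = 1/4"
    using s by simp
  finally show ?thesis .
qed

lemma complete_hom3_has_zero_in_cball: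
  fixes s c :: complex
  assumes s: "cmod s < 1" and c: "cmod c = 1" "c \<noteq> 1"
    and \<rho>: "0 < \<rho>" "\<rho> < cmod (c - 1)" "\<rho> \<le> (1 - cmod s) / 8"
    and m: "3 * cmod s ^ (m + 2) \<le> (1 - cmod s) / 8"
      "2 * (\<bar>ln (cmod ((c - s) / (1 - s)))\<bar> + pi + 1/2) \<le> real (m + 2) * \<rho>"
  shows "\<exists>w\<in>cball c \<rho>. complete_hom3 s 1 w m = 0"
proof -
  define n where "n = m + 2"
  define g0 where "g0 = (c - s) / (1 - s)"
  define g where "g w = ((w - s) - s ^ n * (w - 1)) / (1 - s)" for w
  have s1: "1 - s \<noteq> 0"
    using s by auto
  have cs: "1 - cmod s \<le> cmod (c - s)"
    using norm_triangle_ineq2[of c s] c by simp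
  have near: "cmod (g w / g0 - 1) \<le> 1/4" if "w \<in> cball c \<rho>" for w
  proof -
    have wc: "cmod (w - c) \<le> (1 - cmod s) / 8"
      using that \<rho>(3) by (simp add: dist_norm norm_minus_commute)
    have "g w / g0 = ((w - s) - s ^ n * (w - 1)) / (c - s)"
      using s1 by (simp add: g_def g0_def)
    then show ?thesis
      unfolding n_def using norm_perturbed_ratio_le[OF s c(1) wc m(1)] by simp
  qed
  have g_cont: "continuous_on (cball c \<rho>) g"
    unfolding g_def by (intro continuous_intros) (use s1 in simp)
  have g0: "g0 \<noteq> 0"
    using cs s s1 by (auto simp: g0_def)
  have "\<rho> * 8 \<le> 1 - cmod s"
    using \<rho>(3) by (simp add: field_simps)
  then have "\<rho> \<le> 1"
    using norm_ge_zero[of s] by linarith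
  have "\<exists>w\<in>cball c \<rho>. w ^ n = g w"
    using power_eq_solvable_in_cball[OF c(1) \<rho>(1) \<open>\<rho> \<le> 1\<close> g_cont g0 near, of n] m(2)
    unfolding g0_def n_def by simp
  then obtain w where w: "w \<in> cball c \<rho>" "w ^ n = g w" ..
  have wc: "cmod (w - c) \<le> \<rho>"
    using w(1) by (simp add: dist_norm norm_minus_commute)
  have "w \<noteq> 1"
    using wc \<rho>(2) by (auto simp: norm_minus_commute)
  moreover have "w \<noteq> s"
    using wc \<rho>(3) cs s by (auto simp: norm_minus_commute)
  moreover have "(1 - s) * (w - s) * (w - 1) * complete_hom3 s 1 w m = 0"
    unfolding complete_hom3_s_1_closed_form using w(2) s1 by (simp add: g_def n_def)
  ultimately show ?thesis
    using w(1) s1 by auto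
qed

lemma complete_hom3_eventually_zero_near_circle:
  fixes s w0 :: complex
  assumes s: "cmod s < 1" and w0: "cmod w0 = 1" and r: "r > 0"
  shows "\<forall>\<^sub>F m in sequentially. \<exists>w\<in>ball w0 r. complete_hom3 s 1 w m = 0"
proof -
  \<comment> \<open>\<open>c\<close> avoids 1, where the factor \<open>w - 1\<close> of the closed form vanishes\<close>
  obtain c where c: "cmod c = 1" "c \<noteq> 1" "dist c w0 < r / 2"
    using unit_circle_point_near_ne_1[OF w0, of "r / 2"] r by auto
  define \<rho> where "\<rho> = min (r / 2) (min (cmod (c - 1) / 2) ((1 - cmod s) / 8))"
  have \<rho>: "0 < \<rho>" "\<rho> \<le> r / 2" "\<rho> < cmod (c - 1)"
    using r s c(2) by (auto simp: \<rho>_def min_less_iff_disj)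
  have \<rho>s: "\<rho> \<le> (1 - cmod s) / 8"
    unfolding \<rho>_def by (intro min.coboundedI2 min.cobounded2)
  define C where "C = 2 * (\<bar>ln (cmod ((c - s) / (1 - s)))\<bar> + pi + 1/2)"
  have "(\<lambda>n. 3 * cmod s ^ n) \<longlonglongrightarrow> 3 * 0"
    using s by (intro tendsto_intros LIMSEQ_power_zero) simp
  from order_tendstoD(2)[OF this, of "(1 - cmod s) / 8"]
  have "\<forall>\<^sub>F n in sequentially. 3 * cmod s ^ n < (1 - cmod s) / 8"
    using s by simp
  moreover obtain N where "C < real N * \<rho>"
    using ex_less_of_nat_mult[OF \<rho>(1)] by blast
  then have "\<forall>\<^sub>F n in sequentially. C \<le> real n * \<rho>"
    using \<rho>(1) by (auto intro!: eventually_mono[OF eventually_ge_at_top[of N]] mult_right_mono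
        intro: order_trans[OF less_imp_le])
  ultimately have "\<forall>\<^sub>F n in sequentially. 3 * cmod s ^ n \<le> (1 - cmod s) / 8 \<and> C \<le> real n * \<rho>"
    by eventually_elim auto
  then have "\<forall>\<^sub>F m in sequentially.
      3 * cmod s ^ (m + 2) \<le> (1 - cmod s) / 8 \<and> C \<le> real (m + 2) * \<rho>"
    by (rule eventually_sequentially_seg[where k = 2 and
        P = "\<lambda>n. 3 * cmod s ^ n \<le> (1 - cmod s) / 8 \<and> C \<le> real n * \<rho>", THEN iffD2])
  then show ?thesis
  proof (rule eventually_mono)
    fix m assume m: "3 * cmod s ^ (m + 2) \<le> (1 - cmod s) / 8 \<and> C \<le> real (m + 2) * \<rho>"
    have "\<exists>w\<in>cball c \<rho>. complete_hom3 s 1 w m = 0"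
      by (rule complete_hom3_has_zero_in_cball[OF s c(1,2) \<rho>(1,3) \<rho>s]) (use m in \<open>simp_all add: C_def\<close>)
    then obtain w where w: "w \<in> cball c \<rho>" "complete_hom3 s 1 w m = 0" ..
    have "dist w0 w < r"
      using dist_triangle[of w0 w c] w(1) c(3) \<rho>(2) by (simp add: dist_commute)
    then show "\<exists>w\<in>ball w0 r. complete_hom3 s 1 w m = 0"
      using w(2) by auto
  qed
qed

lemma zeros_complete_hom3_unit_circle:
  fixes s :: complex
  assumes s: "cmod s < 1"
  shows "liminf_zeros (\<lambda>m w. complete_hom3 s 1 w m) = sphere 0 1"
    and "limsup_zeros (\<lambda>m w. complete_hom3 s 1 w m) = sphere 0 1"
proof -
  let ?Q = "\<lambda>m w. complete_hom3 s 1 w m"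
  have "w0 \<in> sphere 0 1" if "w0 \<in> limsup_zeros ?Q" for w0
  proof (rule ccontr)
    assume "w0 \<notin> sphere 0 1"
    then have "cmod w0 > 1 \<or> cmod w0 < 1"
      by auto
    then obtain r where "r > 0" "\<forall>\<^sub>F m in sequentially. \<forall>w\<in>ball w0 r. complete_hom3 s 1 w m \<noteq> 0"
      using complete_hom3_eventually_nonzero_outside[OF s] complete_hom3_eventually_nonzero_inside[OF s]
      by blast
    moreover have "\<exists>\<^sub>F m in sequentially. \<exists>w\<in>ball w0 r. complete_hom3 s 1 w m = 0"
      using that \<open>r > 0\<close> by (simp add: limsup_zeros_iff)
    ultimately show False
      by (simp add: frequently_def)
  qed
  moreover have "sphere 0 1 \<subseteq> liminf_zeros ?Q"
    using complete_hom3_eventually_zero_near_circle[OF s] by (auto simp: liminf_zeros_iff)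
  ultimately show "liminf_zeros ?Q = sphere 0 1" "limsup_zeros ?Q = sphere 0 1"
    using liminf_zeros_subset_limsup_zeros[of ?Q] by blast+
qed

lemma real_quadratic_factor_smaller_root:
  fixes a b c \<alpha> :: real
  assumes a: "a \<noteq> 0" and b: "b \<noteq> 0" and c: "c \<noteq> 0" and disc: "b^2 - 4*a*c > 0"
    and root: "a * \<alpha>^2 + b * \<alpha> + c = 0"
    and smallest: "\<forall>s::complex. of_real a * s^2 + of_real b * s + of_real c = 0 \<longrightarrow> \<bar>\<alpha>\<bar> \<le> cmod s"
  obtains s where "\<alpha> \<noteq> 0" "\<bar>s\<bar> < 1"
    "\<And>t::complex. of_real a * t^2 + of_real b * t + of_real c
        = of_real c * ((1 - of_real s * t / of_real \<alpha>) * (1 - t / of_real \<alpha>))"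
proof -
  define \<beta> where "\<beta> = - b / a - \<alpha>"
  have b_eq: "b = - a * (\<alpha> + \<beta>)"
    using a by (simp add: \<beta>_def field_simps)
  have "a * \<alpha> * \<beta> = - (b * \<alpha> + a * \<alpha>^2)"
    using a by (simp add: \<beta>_def field_simps power2_eq_square)
  then have c_eq: "c = a * \<alpha> * \<beta>"
    using root by linarith
  have \<alpha>\<beta>: "\<alpha> \<noteq> 0" "\<beta> \<noteq> 0"
    using c unfolding c_eq by auto
  have "of_real a * (of_real \<beta>)^2 + of_real b * of_real \<beta> + of_real c = (0::complex)"
    unfolding b_eq c_eq by (simp add: algebra_simps power2_eq_square)
  then have "\<bar>\<alpha>\<bar> \<le> \<bar>\<beta>\<bar>"
    using smallest by fastforce
  moreover have "\<bar>\<alpha>\<bar> \<noteq> \<bar>\<beta>\<bar>"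
  proof
    assume "\<bar>\<alpha>\<bar> = \<bar>\<beta>\<bar>"
    then have "\<beta> = \<alpha> \<or> \<beta> = - \<alpha>"
      by (auto simp: abs_eq_iff)
    moreover have "b^2 - 4*a*c = a^2 * (\<alpha> - \<beta>)^2"
      unfolding b_eq c_eq by (simp add: algebra_simps power2_eq_square)
    ultimately show False
      using disc b unfolding b_eq by auto
  qed
  ultimately have "\<bar>\<alpha> / \<beta>\<bar> < 1"
    using \<alpha>\<beta> by (simp add: abs_divide divide_less_eq_1)
  moreover have "of_real a * t^2 + of_real b * t + of_real c
      = of_real c * ((1 - of_real (\<alpha> / \<beta>) * t / of_real \<alpha>) * (1 - t / of_real \<alpha>))" for t :: complex
    using \<alpha>\<beta> unfolding b_eq c_eq by (simp add: field_simps power2_eq_square)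
  ultimately show ?thesis
    by (intro that[OF \<alpha>\<beta>(1)])
qed

theorem theorem3:
  fixes a b c \<alpha> :: real and P :: "nat \<Rightarrow> complex \<Rightarrow> complex"
  assumes "a \<noteq> 0" "b \<noteq> 0" "c \<noteq> 0" "b^2 - 4*a*c > 0"
    and "P = gen_seq (\<lambda>t z. 1 / ((of_real a * t^2 + of_real b * t + of_real c) * (1 - t * z)))"
    and "a * \<alpha>^2 + b * \<alpha> + c = 0"
    and "\<forall>s::complex. of_real a * s^2 + of_real b * s + of_real c = 0 \<longrightarrow> \<bar>\<alpha>\<bar> \<le> cmod s"
  shows "liminf_zeros P = limsup_zeros P \<and> liminf_zeros P = {z. cmod z = 1 / \<bar>\<alpha>\<bar>}"
proof -
  obtain s where \<alpha>: "\<alpha> \<noteq> 0" and s: "\<bar>s\<bar> < 1"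
    and factor: "\<And>t::complex. of_real a * t^2 + of_real b * t + of_real c
        = of_real c * ((1 - of_real s * t / of_real \<alpha>) * (1 - t / of_real \<alpha>))"
    using real_quadratic_factor_smaller_root[OF assms(1-4,6,7)] by blast
  have "P m z = complete_hom3 (of_real s) 1 (of_real \<alpha> * z) m / (of_real \<alpha> ^ m * of_real c)" for m z
    unfolding assms(5) factor by (rule gen_seq_geometric3_rescaled) (use \<alpha> in simp)
  then have "P m z = 0 \<longleftrightarrow> complete_hom3 (of_real s) 1 (of_real \<alpha> * z) m = 0" for m z
    using \<alpha> assms(3) by simp
  then have "liminf_zeros P = {z. of_real \<alpha> * z \<in> sphere 0 1}"
    and "limsup_zeros P = {z. of_real \<alpha> * z \<in> sphere 0 1}"
    using zeros_rescale[of "of_real \<alpha>" P "\<lambda>m w. complete_hom3 (of_real s) 1 w m"]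
      zeros_complete_hom3_unit_circle[of "of_real s"] s \<alpha>
    by simp_all
  moreover have "{z. of_real \<alpha> * z \<in> sphere 0 1} = {z. cmod z = 1 / \<bar>\<alpha>\<bar>}"
    using \<alpha> by (auto simp: norm_mult field_simps)
  ultimately show ?thesis
    by simp
qed

end
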